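(* Let $\Phi$ be an $m\times n$ matrix with entries in $\{0,1\}$ such that every column contains exactly $d$ ones, and let $G=(A,B,E)$ be the bipartite graph with $A=\{1,\dots,n\}$ (columns), $B=\{1,\dots,m\}$ (rows) and $(i,j)\in E$ iff $\Phi_{j,i}=1$. Suppose that for some scaling factor $S>0$ the matrix $S\Phi$ satisfies the $\mathrm{RIP}_{1,s,\delta}$ property. Then $G$ (whose adjacency matrix is $\Phi$) is an $(s,\epsilon)$-unbalanced expander with $$\epsilon=\Big(1-\frac{1}{1+\delta}\Big)\Big/\big(2-\sqrt2\big).$$
   Context: An $m\times n$ matrix $M$ satisfies $\mathrm{RIP}_{p,k,\delta}$ if for every $k$-sparse $x\in\mathbb{R}^n$ (at most $k$ nonzero coordinates), $\|x\|_p\le\|Mx\|_p\le(1+\delta)\|x\|_p$. A $(k,\epsilon)$-unbalanced expander is a simple bipartite graph $G=(A,B,E)$ in which every vertex of $A$ has exactly $d$ neighbours (left degree $d$) such that for every $X\subseteq A$ with $|X|\le k$, the neighbourhood $N(X)\subseteq B$ satisfies $|N(X)|\ge(1-\epsilon)d|X|$. *)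

theory Defs
  imports Complex_Main
begin

text \<open>Vectors in R^n are functions nat => real supported on {..<n} (0-based indices);
  an m x n matrix is a function M :: nat => nat => real, entry (j,i) = M j i, j<m, i<n.\<close>

definition lpnorm :: "real \<Rightarrow> nat \<Rightarrow> (nat \<Rightarrow> real) \<Rightarrow> real" where
  "lpnorm p n x = (\<Sum>i<n. \<bar>x i\<bar> powr p) powr (1 / p)"

definition mat_vec :: "nat \<Rightarrow> (nat \<Rightarrow> nat \<Rightarrow> real) \<Rightarrow> (nat \<Rightarrow> real) \<Rightarrow> (nat \<Rightarrow> real)" where
  "mat_vec n M x = (\<lambda>j. \<Sum>i<n. M j i * x i)"

definition sparse :: "nat \<Rightarrow> nat \<Rightarrow> (nat \<Rightarrow> real) \<Rightarrow> bool" where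
  "sparse n k x \<longleftrightarrow> (\<forall>i\<ge>n. x i = 0) \<and> card {i\<in>{..<n}. x i \<noteq> 0} \<le> k"

definition RIP :: "nat \<Rightarrow> nat \<Rightarrow> (nat \<Rightarrow> nat \<Rightarrow> real) \<Rightarrow> real \<Rightarrow> nat \<Rightarrow> real \<Rightarrow> bool" where
  "RIP m n M p k \<delta> \<longleftrightarrow>
     (\<forall>x. sparse n k x \<longrightarrow>
        lpnorm p n x \<le> lpnorm p m (mat_vec n M x) \<and>
        lpnorm p m (mat_vec n M x) \<le> (1 + \<delta>) * lpnorm p n x)"

text \<open>Bipartite graph with left part A = {..<n}, right part B = {..<m}, edge relation E i j
  (i in A, j in B).\<close>
definition nbhd :: "nat \<Rightarrow> (nat \<Rightarrow> nat \<Rightarrow> bool) \<Rightarrow> nat set \<Rightarrow> nat set" where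
  "nbhd m E X = {j\<in>{..<m}. \<exists>i\<in>X. E i j}"

definition unbalanced_expander ::
  "nat \<Rightarrow> nat \<Rightarrow> (nat \<Rightarrow> nat \<Rightarrow> bool) \<Rightarrow> nat \<Rightarrow> nat \<Rightarrow> real \<Rightarrow> bool" where
  "unbalanced_expander n m E d k \<epsilon> \<longleftrightarrow>
     (\<forall>i<n. card {j\<in>{..<m}. E i j} = d) \<and>
     (\<forall>X\<subseteq>{..<n}. card X \<le> k \<longrightarrow>
        real (card (nbhd m E X)) \<ge> (1 - \<epsilon>) * real d * real (card X))"

end

theory Submission imports Defs "HOL-Library.FuncSet" begin

(* Fix X with |X| <= s and, for every row j, let C_j be the set of columns
   in X having a one in row j (adj_cols Phi X j below).  For a sign vector sigma on X, extended by zero, the vector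
   S*Phi*sigma has entries S * (sum of sigma over C_j), so RIP_1 gives
     |X| <= S * sum_j |sum_{i in C_j} sigma_i| <= (1 + delta) |X|.
   (1) The all-ones vector and the double count sum_j |C_j| = d|X| give S d <= 1 + delta.
   (2) Averaging the lower bound over all 2^|X| sign vectors and using the Khintchine-type
       estimate  E |sum_{i in C} sigma_i| <= sqrt |C|  gives |X| <= S * sum_j sqrt |C_j|.
   (3) For a natural number c, sqrt c <= (sqrt 2 - 1) c + (2 - sqrt 2) [c > 0]; summing over
       j gives sum_j sqrt |C_j| <= (sqrt 2 - 1) d |X| + (2 - sqrt 2) |N(X)|.
   Combining (1)-(3) and solving for |N(X)| yields the expansion bound. *)

definition signs :: "nat set \<Rightarrow> (nat \<Rightarrow> real) set" where
  "signs X = PiE X (\<lambda>_. {-1, 1})"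

lemma card_signs_pos: "finite X \<Longrightarrow> card (signs X) > 0"
  by (simp add: signs_def card_PiE card_gt_0_iff)

lemma signs_values: "\<sigma> \<in> signs X \<Longrightarrow> i \<in> X \<Longrightarrow> \<sigma> i = -1 \<or> \<sigma> i = 1"
  by (auto simp: signs_def PiE_def Pi_def)

text \<open>Distinct signs are uncorrelated: flipping the sign at i is an involution of
  the sign vectors that negates \<sigma> i * \<sigma> k.\<close>
lemma signs_uncorrelated:
  assumes "i \<in> X" "i \<noteq> k"
  shows "(\<Sum>\<sigma>\<in>signs X. \<sigma> i * \<sigma> k) = 0"
proof -
  define flip where "flip = (\<lambda>\<sigma>::nat\<Rightarrow>real. \<sigma>(i := - \<sigma> i))"
  have flip_signs: "\<sigma> \<in> signs X \<Longrightarrow> flip \<sigma> \<in> signs X" for \<sigma>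
    using assms(1) by (auto simp: flip_def signs_def PiE_def Pi_def extensional_def)
  have flip_flip: "flip (flip \<sigma>) = \<sigma>" for \<sigma>
    by (simp add: flip_def)
  have "bij_betw flip (signs X) (signs X)"
    by (rule bij_betwI[of flip _ _ flip]) (simp_all add: flip_signs flip_flip)
  then have "(\<Sum>\<sigma>\<in>signs X. \<sigma> i * \<sigma> k) = (\<Sum>\<sigma>\<in>signs X. flip \<sigma> i * flip \<sigma> k)"
    using sum.reindex_bij_betw[of flip "signs X" "signs X" "\<lambda>\<sigma>. \<sigma> i * \<sigma> k"] by simp
  also have "\<dots> = - (\<Sum>\<sigma>\<in>signs X. \<sigma> i * \<sigma> k)"
    using assms(2) by (simp add: flip_def sum_negf[symmetric])
  finally show ?thesis by simp
qed

lemma signs_second_moment: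
  assumes "finite X" "C \<subseteq> X"
  shows "(\<Sum>\<sigma>\<in>signs X. (\<Sum>i\<in>C. \<sigma> i)^2) = real (card (signs X)) * card C"
proof -
  have diag: "(\<Sum>\<sigma>\<in>signs X. \<sigma> i * \<sigma> k) = (if k = i then real (card (signs X)) else 0)"
    if "i \<in> C" "k \<in> C" for i k
  proof (cases "k = i")
    case True
    then have "(\<Sum>\<sigma>\<in>signs X. \<sigma> i * \<sigma> k) = (\<Sum>\<sigma>\<in>signs X. 1)"
      using that assms(2) by (intro sum.cong) (auto dest: signs_values)
    then show ?thesis using True by simp
  qed (use signs_uncorrelated that assms(2) in auto)
  have "(\<Sum>\<sigma>\<in>signs X. (\<Sum>i\<in>C. \<sigma> i)^2) = (\<Sum>i\<in>C. \<Sum>k\<in>C. \<Sum>\<sigma>\<in>signs X. \<sigma> i * \<sigma> k)"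
    by (simp add: power2_eq_square sum_product sum.swap[of _ "signs X"])
  also have "\<dots> = (\<Sum>i\<in>C. real (card (signs X)))"
    using finite_subset[OF assms(2,1)] by (intro sum.cong) (simp_all add: diag)
  finally show ?thesis by simp
qed

text \<open>Khintchine-type first moment bound: the average of |\<Sum>i\<in>C. \<sigma> i| is at most sqrt |C|.
  It follows from the second moment via 2 c |a| \<le> a^2 + c^2 with c = sqrt |C|.\<close>
lemma signs_first_moment:
  assumes "finite X" "C \<subseteq> X"
  shows "(\<Sum>\<sigma>\<in>signs X. \<bar>\<Sum>i\<in>C. \<sigma> i\<bar>) \<le> real (card (signs X)) * sqrt (card C)"
proof (cases "C = {}")
  case False
  define c where "c = sqrt (card C)"
  have c_pos: "c > 0"
    using False finite_subset[OF assms(2,1)] by (simp add: c_def card_gt_0_iff)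
  have amgm: "2 * c * \<bar>a\<bar> \<le> a^2 + c^2" for a :: real
    using zero_le_power2[of "\<bar>a\<bar> - c"] by (simp add: power2_eq_square algebra_simps)
  have "2 * c * (\<Sum>\<sigma>\<in>signs X. \<bar>\<Sum>i\<in>C. \<sigma> i\<bar>) \<le> (\<Sum>\<sigma>\<in>signs X. (\<Sum>i\<in>C. \<sigma> i)^2 + c^2)"
    unfolding sum_distrib_left by (intro sum_mono amgm)
  also have "\<dots> = 2 * c * (real (card (signs X)) * c)"
    by (simp add: sum.distrib signs_second_moment[OF assms] c_def algebra_simps)
  finally show ?thesis using c_pos by (simp add: c_def)
qed simp

text \<open>On natural numbers the concave function sqrt lies below the chord through
  (1,1) and (2, sqrt 2), up to the jump at 0.\<close>
lemma sqrt_nat_le_chord: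
  "sqrt (real c) \<le> (sqrt 2 - 1) * real c + (2 - sqrt 2) * (if c = 0 then 0 else 1)"
proof (cases "c = 0")
  case False
  define r where "r = sqrt (real c)"
  have "0 \<le> (r - 1) * (r - sqrt 2)"
  proof (cases "c = 1")
    case False
    with \<open>c \<noteq> 0\<close> have "r \<ge> sqrt 2" by (simp add: r_def)
    moreover have "sqrt 2 \<ge> (1::real)" by simp
    ultimately show ?thesis by (intro mult_nonneg_nonneg) linarith+
  qed (simp add: r_def)
  then have "0 \<le> (sqrt 2 - 1) * ((r - 1) * (r - sqrt 2))"
    by simp
  also have "\<dots> = (sqrt 2 - 1) * r^2 - r + (2 - sqrt 2)"
    by (simp add: power2_eq_square algebra_simps)
  finally show ?thesis using False by (simp add: r_def)
qed simp

lemma lpnorm_one: "lpnorm 1 n x = (\<Sum>i<n. \<bar>x i\<bar>)"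
  by (simp add: lpnorm_def sum_nonneg)

lemma rip_sign_vector_bounds:
  assumes rip: "RIP m n M 1 s \<delta>"
    and X: "X \<subseteq> {..<n}" "card X \<le> s"
    and \<sigma>: "\<forall>i\<in>X. \<sigma> i = -1 \<or> \<sigma> i = 1"
  shows "real (card X) \<le> (\<Sum>j<m. \<bar>\<Sum>i\<in>X. M j i * \<sigma> i\<bar>)"
    and "(\<Sum>j<m. \<bar>\<Sum>i\<in>X. M j i * \<sigma> i\<bar>) \<le> (1 + \<delta>) * real (card X)"
proof -
  define x where "x i = (if i \<in> X then \<sigma> i else 0)" for i
  have support: "{i\<in>{..<n}. x i \<noteq> 0} = X"
    using X \<sigma> by (auto simp: x_def)
  have "sparse n s x"
    unfolding sparse_def using support X by (auto simp: x_def)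
  moreover have "lpnorm 1 n x = real (card X)"
  proof -
    have "(\<Sum>i<n. \<bar>x i\<bar>) = (\<Sum>i\<in>X. \<bar>\<sigma> i\<bar>)"
      using X by (intro sum.mono_neutral_cong_right) (auto simp: x_def)
    also have "\<dots> = (\<Sum>i\<in>X. 1)"
      using \<sigma> by (intro sum.cong) auto
    finally show ?thesis by (simp add: lpnorm_one)
  qed
  moreover have "mat_vec n M x = (\<lambda>j. \<Sum>i\<in>X. M j i * \<sigma> i)"
    unfolding mat_vec_def using X
    by (intro ext sum.mono_neutral_cong_right) (auto simp: x_def)
  ultimately show "real (card X) \<le> (\<Sum>j<m. \<bar>\<Sum>i\<in>X. M j i * \<sigma> i\<bar>)"
    and "(\<Sum>j<m. \<bar>\<Sum>i\<in>X. M j i * \<sigma> i\<bar>) \<le> (1 + \<delta>) * real (card X)"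
    using rip by (auto simp: RIP_def lpnorm_one)
qed

definition adj_cols :: "(nat \<Rightarrow> nat \<Rightarrow> real) \<Rightarrow> nat set \<Rightarrow> nat \<Rightarrow> nat set" where
  "adj_cols \<Phi> X j = {i\<in>X. \<Phi> j i = 1}"

lemma adj_cols_subset: "adj_cols \<Phi> X j \<subseteq> X"
  by (auto simp: adj_cols_def)

lemma zero_one_row_sum:
  assumes "finite X" "\<forall>i\<in>X. \<Phi> j i = 0 \<or> \<Phi> j i = 1"
  shows "(\<Sum>i\<in>X. S * \<Phi> j i * \<sigma> i) = S * (\<Sum>i\<in>adj_cols \<Phi> X j. \<sigma> i)"
proof -
  have "(\<Sum>i\<in>X. S * \<Phi> j i * \<sigma> i) = (\<Sum>i\<in>X. S * (if \<Phi> j i = 1 then \<sigma> i else 0))"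
    using assms(2) by (intro sum.cong) auto
  then show ?thesis
    by (simp add: sum_distrib_left[symmetric] sum.inter_filter[OF assms(1)] adj_cols_def)
qed

lemma adj_cols_double_count:
  assumes columns: "\<forall>i<n. card {j\<in>{..<m}. \<Phi> j i = 1} = d"
    and X: "X \<subseteq> {..<n}"
  shows "(\<Sum>j<m. real (card (adj_cols \<Phi> X j))) = real d * real (card X)"
proof -
  have fin: "finite X" using X finite_subset by blast
  have "(\<Sum>j<m. real (card (adj_cols \<Phi> X j))) = (\<Sum>j<m. \<Sum>i\<in>X. if \<Phi> j i = 1 then 1 else (0::real))"
    by (simp add: adj_cols_def sum.If_cases[OF fin] Int_def)
  also have "\<dots> = (\<Sum>i\<in>X. \<Sum>j<m. if \<Phi> j i = 1 then 1 else (0::real))"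
    by (rule sum.swap)
  also have "\<dots> = (\<Sum>i\<in>X. real d)"
    using columns X by (intro sum.cong) (auto simp: sum.If_cases Int_def)
  finally show ?thesis by simp
qed

lemma card_nbhd_as_sum:
  "real (card (nbhd m (\<lambda>i j. \<Phi> j i = 1) X)) = (\<Sum>j<m. if adj_cols \<Phi> X j = {} then 0 else 1)"
proof -
  have "nbhd m (\<lambda>i j. \<Phi> j i = 1) X = {..<m} \<inter> {j. adj_cols \<Phi> X j \<noteq> {}}"
    by (auto simp: nbhd_def adj_cols_def)
  then show ?thesis by (simp add: sum.If_cases Int_def)
qed

lemma incidence_rip_bounds:
  assumes entries: "\<forall>j<m. \<forall>i<n. \<Phi> j i = 0 \<or> \<Phi> j i = 1"
    and rip: "RIP m n (\<lambda>j i. S * \<Phi> j i) 1 s \<delta>"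
    and S_pos: "S > 0"
    and X: "X \<subseteq> {..<n}" "card X \<le> s"
    and \<sigma>: "\<forall>i\<in>X. \<sigma> i = -1 \<or> \<sigma> i = 1"
  shows "real (card X) \<le> S * (\<Sum>j<m. \<bar>\<Sum>i\<in>adj_cols \<Phi> X j. \<sigma> i\<bar>)"
    and "S * (\<Sum>j<m. \<bar>\<Sum>i\<in>adj_cols \<Phi> X j. \<sigma> i\<bar>) \<le> (1 + \<delta>) * real (card X)"
proof -
  have "finite X" using X finite_subset by blast
  then have "\<bar>\<Sum>i\<in>X. S * \<Phi> j i * \<sigma> i\<bar> = S * \<bar>\<Sum>i\<in>adj_cols \<Phi> X j. \<sigma> i\<bar>" if "j < m" for j
    using entries X S_pos that by (subst zero_one_row_sum) (auto simp: abs_mult)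
  then have "(\<Sum>j<m. \<bar>\<Sum>i\<in>X. S * \<Phi> j i * \<sigma> i\<bar>) = S * (\<Sum>j<m. \<bar>\<Sum>i\<in>adj_cols \<Phi> X j. \<sigma> i\<bar>)"
    by (simp add: sum_distrib_left)
  then show "real (card X) \<le> S * (\<Sum>j<m. \<bar>\<Sum>i\<in>adj_cols \<Phi> X j. \<sigma> i\<bar>)"
    and "S * (\<Sum>j<m. \<bar>\<Sum>i\<in>adj_cols \<Phi> X j. \<sigma> i\<bar>) \<le> (1 + \<delta>) * real (card X)"
    using rip_sign_vector_bounds[OF rip X \<sigma>] by simp_all
qed

text \<open>Testing RIP with the all-ones vector on a nonempty X pins the scaling factor:
  1 \<le> S d \<le> 1 + \<delta>.\<close>
lemma scaling_factor_bounds: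
  assumes entries: "\<forall>j<m. \<forall>i<n. \<Phi> j i = 0 \<or> \<Phi> j i = 1"
    and columns: "\<forall>i<n. card {j\<in>{..<m}. \<Phi> j i = 1} = d"
    and rip: "RIP m n (\<lambda>j i. S * \<Phi> j i) 1 s \<delta>"
    and S_pos: "S > 0"
    and X: "X \<subseteq> {..<n}" "card X \<le> s" "X \<noteq> {}"
  shows "1 \<le> S * real d" and "S * real d \<le> 1 + \<delta>"
proof -
  have X_pos: "real (card X) > 0"
    using X finite_subset[of X "{..<n}"] by (simp add: card_gt_0_iff)
  have ones: "(\<Sum>j<m. \<bar>\<Sum>i\<in>adj_cols \<Phi> X j. 1::real\<bar>) = real d * real (card X)"
    using adj_cols_double_count[OF columns X(1)] by simp
  show "1 \<le> S * real d" and "S * real d \<le> 1 + \<delta>"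
    using incidence_rip_bounds[OF entries rip S_pos X(1,2), of "\<lambda>_. 1"] X_pos
    unfolding ones by (simp_all add: mult.assoc[symmetric])
qed

text \<open>Averaging the lower RIP bound over all sign vectors and applying the first
  moment bound row by row: |X| \<le> S \<Sum>j sqrt |C_j|.\<close>
lemma averaged_lower_bound:
  assumes entries: "\<forall>j<m. \<forall>i<n. \<Phi> j i = 0 \<or> \<Phi> j i = 1"
    and rip: "RIP m n (\<lambda>j i. S * \<Phi> j i) 1 s \<delta>"
    and S_pos: "S > 0"
    and X: "X \<subseteq> {..<n}" "card X \<le> s"
  shows "real (card X) \<le> S * (\<Sum>j<m. sqrt (card (adj_cols \<Phi> X j)))"
proof -
  have fin: "finite X" using X finite_subset by blast
  define N where "N = real (card (signs X))"
  have "N * real (card X) = (\<Sum>\<sigma>\<in>signs X. real (card X))" by (simp add: N_def)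
  also have "\<dots> \<le> (\<Sum>\<sigma>\<in>signs X. S * (\<Sum>j<m. \<bar>\<Sum>i\<in>adj_cols \<Phi> X j. \<sigma> i\<bar>))"
    using incidence_rip_bounds(1)[OF entries rip S_pos X] signs_values
    by (intro sum_mono) blast
  also have "\<dots> = S * (\<Sum>j<m. \<Sum>\<sigma>\<in>signs X. \<bar>\<Sum>i\<in>adj_cols \<Phi> X j. \<sigma> i\<bar>)"
    by (simp add: sum_distrib_left sum.swap[of _ "signs X"])
  also have "\<dots> \<le> S * (\<Sum>j<m. N * sqrt (card (adj_cols \<Phi> X j)))"
    using S_pos signs_first_moment[OF fin adj_cols_subset]
    by (auto intro!: mult_left_mono sum_mono simp: N_def)
  also have "\<dots> = N * (S * (\<Sum>j<m. sqrt (card (adj_cols \<Phi> X j))))"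
    by (simp add: sum_distrib_left algebra_simps)
  finally show ?thesis
    using card_signs_pos[OF fin] by (simp add: N_def)
qed

lemma sqrt_sum_bound:
  assumes columns: "\<forall>i<n. card {j\<in>{..<m}. \<Phi> j i = 1} = d"
    and X: "X \<subseteq> {..<n}"
  shows "(\<Sum>j<m. sqrt (card (adj_cols \<Phi> X j)))
           \<le> (sqrt 2 - 1) * (real d * real (card X))
             + (2 - sqrt 2) * real (card (nbhd m (\<lambda>i j. \<Phi> j i = 1) X))"
proof -
  have empty_iff: "card (adj_cols \<Phi> X j) = 0 \<longleftrightarrow> adj_cols \<Phi> X j = {}" for j
    using finite_subset[OF adj_cols_subset finite_subset[OF X]] by simp
  have "(\<Sum>j<m. sqrt (card (adj_cols \<Phi> X j)))
      \<le> (\<Sum>j<m. (sqrt 2 - 1) * real (card (adj_cols \<Phi> X j))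
                 + (2 - sqrt 2) * (if adj_cols \<Phi> X j = {} then 0 else 1))"
    using sqrt_nat_le_chord by (intro sum_mono) (simp add: empty_iff[symmetric])
  also have "\<dots> = (sqrt 2 - 1) * (real d * real (card X))
             + (2 - sqrt 2) * real (card (nbhd m (\<lambda>i j. \<Phi> j i = 1) X))"
    unfolding sum.distrib sum_distrib_left[symmetric] adj_cols_double_count[OF columns X]
      card_nbhd_as_sum ..
  finally show ?thesis .
qed

text \<open>The final rearrangement: from d L/(1 + \<delta>) \<le> L/S \<le> (a - 1) d L + (2 - a) K, solve
  for K (here D = d L, and a = sqrt 2 in the application).\<close>
lemma expansion_rearrangement:
  fixes D L K S \<delta> a :: real
  assumes "S > 0" "1 + \<delta> > 0" "a < 2"
    and upper: "S * D \<le> (1 + \<delta>) * L"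
    and lower: "L \<le> S * ((a - 1) * D + (2 - a) * K)"
  shows "(1 - (1 - 1 / (1 + \<delta>)) / (2 - a)) * D \<le> K"
proof -
  have "D / (1 + \<delta>) \<le> L / S"
    using assms(1,2) upper by (simp add: divide_simps mult.commute)
  also have "\<dots> \<le> (a - 1) * D + (2 - a) * K"
    using assms(1) lower by (simp add: divide_simps mult.commute)
  finally have "D / (1 + \<delta>) - (a - 1) * D \<le> (2 - a) * K" by simp
  moreover have "(1 - (1 - 1 / (1 + \<delta>)) / (2 - a)) * D = (D / (1 + \<delta>) - (a - 1) * D) / (2 - a)"
  proof -
    have "(2 - a) * (1 + \<delta>) \<noteq> 0" using assms(2,3) by simp
    then have "2 + \<delta> * 2 - (a + \<delta> * a) \<noteq> 0" by (simp add: algebra_simps)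
    with assms(2,3) show ?thesis by (simp add: field_simps)
  qed
  ultimately show ?thesis
    using assms(3) by (simp add: divide_le_eq mult.commute)
qed

theorem theorem2:
  fixes m n d s :: nat and \<Phi> :: "nat \<Rightarrow> nat \<Rightarrow> real" and S \<delta> :: real
  assumes entries: "\<forall>j<m. \<forall>i<n. \<Phi> j i = 0 \<or> \<Phi> j i = 1"
    and columns: "\<forall>i<n. card {j\<in>{..<m}. \<Phi> j i = 1} = d"
    and S_pos: "S > 0"
    and rip: "RIP m n (\<lambda>j i. S * \<Phi> j i) 1 s \<delta>"
  shows "unbalanced_expander n m (\<lambda>i j. \<Phi> j i = 1) d s
           ((1 - 1 / (1 + \<delta>)) / (2 - sqrt 2))"
  unfolding unbalanced_expander_def
proof (intro conjI allI impI)
  fix X assume X: "X \<subseteq> {..<n}" "card X \<le> s"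
  show "(1 - (1 - 1 / (1 + \<delta>)) / (2 - sqrt 2)) * real d * real (card X)
        \<le> real (card (nbhd m (\<lambda>i j. \<Phi> j i = 1) X))"
  proof (cases "X = {}")
    case False
    define K where "K = real (card (nbhd m (\<lambda>i j. \<Phi> j i = 1) X))"
    define D where "D = real d * real (card X)"
    note Sd = scaling_factor_bounds[OF entries columns rip S_pos X False]
    have "sqrt 2 < sqrt (4::real)" by (rule real_sqrt_less_mono) simp
    then have sqrt2: "sqrt 2 < (2::real)" by simp
    have upper: "S * D \<le> (1 + \<delta>) * real (card X)"
      using mult_right_mono[OF Sd(2), of "real (card X)"] by (simp add: D_def mult.assoc)
    have "real (card X) \<le> S * (\<Sum>j<m. sqrt (card (adj_cols \<Phi> X j)))"
      by (rule averaged_lower_bound[OF entries rip S_pos X])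
    also have "\<dots> \<le> S * ((sqrt 2 - 1) * D + (2 - sqrt 2) * K)"
      using sqrt_sum_bound[OF columns X(1)] S_pos
      unfolding D_def K_def by (intro mult_left_mono) auto
    finally have lower: "real (card X) \<le> S * ((sqrt 2 - 1) * D + (2 - sqrt 2) * K)" .
    have "1 + \<delta> > 0" using Sd by linarith
    from expansion_rearrangement[OF S_pos this sqrt2 upper lower]
    show ?thesis by (simp add: D_def K_def mult.assoc)
  qed simp
qed (use columns in simp)

end
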